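(* Let $T$ be a tree of order at least $6$ in which the set $S'(T)$ of weak support vertices is a maximum $2$-packing. Then $d_T(x,S'(T)\setminus\{x\})=3$ for every $x\in S'(T)$.
   Context: A weak support vertex is a vertex adjacent to exactly one leaf. A $2$-packing is a set of vertices pairwise at distance at least $3$; a maximum $2$-packing is one of maximum cardinality. $d_T(x,Y)=\min_{y\in Y}d_T(x,y)$. *)

theory Defs
  imports Main
begin

definition graph :: "'a set \<Rightarrow> ('a \<Rightarrow> 'a \<Rightarrow> bool) \<Rightarrow> bool" where
  "graph V E \<longleftrightarrow> finite V \<and> (\<forall>x y. E x y \<longrightarrow> x \<in> V \<and> y \<in> V \<and> x \<noteq> y \<and> E y x)"

definition edges :: "'a set \<Rightarrow> ('a \<Rightarrow> 'a \<Rightarrow> bool) \<Rightarrow> 'a set set" where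
  "edges V E = {{x, y} | x y. x \<in> V \<and> y \<in> V \<and> E x y}"

definition walk :: "'a set \<Rightarrow> ('a \<Rightarrow> 'a \<Rightarrow> bool) \<Rightarrow> 'a list \<Rightarrow> bool" where
  "walk V E xs \<longleftrightarrow> xs \<noteq> [] \<and> set xs \<subseteq> V \<and> (\<forall>i. Suc i < length xs \<longrightarrow> E (xs ! i) (xs ! Suc i))"

definition connected_graph :: "'a set \<Rightarrow> ('a \<Rightarrow> 'a \<Rightarrow> bool) \<Rightarrow> bool" where
  "connected_graph V E \<longleftrightarrow>
     (\<forall>x\<in>V. \<forall>y\<in>V. \<exists>xs. walk V E xs \<and> hd xs = x \<and> last xs = y)"

definition tree :: "'a set \<Rightarrow> ('a \<Rightarrow> 'a \<Rightarrow> bool) \<Rightarrow> bool" where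
  "tree V E \<longleftrightarrow> graph V E \<and> V \<noteq> {} \<and> connected_graph V E \<and> card (edges V E) = card V - 1"

definition dist :: "'a set \<Rightarrow> ('a \<Rightarrow> 'a \<Rightarrow> bool) \<Rightarrow> 'a \<Rightarrow> 'a \<Rightarrow> nat" where
  "dist V E x y = (LEAST n. \<exists>xs. walk V E xs \<and> hd xs = x \<and> last xs = y \<and> length xs = Suc n)"

definition dist_set :: "'a set \<Rightarrow> ('a \<Rightarrow> 'a \<Rightarrow> bool) \<Rightarrow> 'a \<Rightarrow> 'a set \<Rightarrow> nat" where
  "dist_set V E x Y = Min (dist V E x ` Y)"

definition leaf :: "'a set \<Rightarrow> ('a \<Rightarrow> 'a \<Rightarrow> bool) \<Rightarrow> 'a \<Rightarrow> bool" where
  "leaf V E v \<longleftrightarrow> v \<in> V \<and> card {u \<in> V. E v u} = 1"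

definition weak_support :: "'a set \<Rightarrow> ('a \<Rightarrow> 'a \<Rightarrow> bool) \<Rightarrow> 'a \<Rightarrow> bool" where
  "weak_support V E v \<longleftrightarrow> v \<in> V \<and> card {u \<in> V. E v u \<and> leaf V E u} = 1"

definition weak_supports :: "'a set \<Rightarrow> ('a \<Rightarrow> 'a \<Rightarrow> bool) \<Rightarrow> 'a set" where
  "weak_supports V E = {v \<in> V. weak_support V E v}"

definition two_packing :: "'a set \<Rightarrow> ('a \<Rightarrow> 'a \<Rightarrow> bool) \<Rightarrow> 'a set \<Rightarrow> bool" where
  "two_packing V E P \<longleftrightarrow> P \<subseteq> V \<and> (\<forall>x\<in>P. \<forall>y\<in>P. x \<noteq> y \<longrightarrow> dist V E x y \<ge> 3)"

definition max_two_packing :: "'a set \<Rightarrow> ('a \<Rightarrow> 'a \<Rightarrow> bool) \<Rightarrow> 'a set \<Rightarrow> bool" where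
  "max_two_packing V E P \<longleftrightarrow> two_packing V E P \<and>
     (\<forall>Q. two_packing V E Q \<longrightarrow> card Q \<le> card P)"

end

theory Submission
  imports Defs
begin

text \<open>Suppose a weak support vertex \<open>x\<close> had no other weak support vertex at distance 3;
  since they form a 2-packing, all others are then at distance at least 4 from \<open>x\<close>.
  A tree on at least three vertices with a weak support vertex \<open>x\<close> is not a star centred
  at \<open>x\<close>, so some \<open>w\<close> lies at distance 2 from \<open>x\<close>, hence at distance at least 2 from
  every weak support vertex. Replacing each weak support vertex within distance 2 of \<open>w\<close> by
  its pendant leaf and adding \<open>w\<close> gives a larger 2-packing, contradicting maximality.\<close>

lemma walk_Cons_Cons [simp]:
  "walk V E (a # b # xs) \<longleftrightarrow> a \<in> V \<and> E a b \<and> walk V E (b # xs)"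
  unfolding walk_def by (auto simp: nth_Cons split: nat.splits)

lemma walk_singleton [simp]: "walk V E [x] \<longleftrightarrow> x \<in> V"
  by (simp add: walk_def)

lemma walk_nonempty: "walk V E xs \<Longrightarrow> xs \<noteq> []"
  by (simp add: walk_def)

lemma walk_append:
  "walk V E xs \<Longrightarrow> walk V E ys \<Longrightarrow> last xs = hd ys \<Longrightarrow> walk V E (xs @ tl ys)"
proof (induction xs rule: induct_list012)
  case 1
  then show ?case by (simp add: walk_def)
next
  case (2 x)
  then show ?case by (cases ys) auto
qed auto

lemma dist_set_eqI:
  assumes "finite Y" "y \<in> Y" "dist V E x y = d" "\<forall>z\<in>Y. d \<le> dist V E x z"
  shows "dist_set V E x Y = d"
  unfolding dist_set_def using assms by (intro Min_eqI) auto

locale connected_simple_graph =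
  fixes V :: "'a set" and E :: "'a \<Rightarrow> 'a \<Rightarrow> bool"
  assumes graph: "graph V E" and connected: "connected_graph V E"
begin

lemma finite_V: "finite V"
  using graph by (simp add: graph_def)

lemma adj_sym: "E x y \<Longrightarrow> E y x"
  using graph unfolding graph_def by blast

lemma adj_in_V: "E x y \<Longrightarrow> x \<in> V \<and> y \<in> V \<and> x \<noteq> y"
  using graph unfolding graph_def by blast

lemma walk_rev: "walk V E xs \<Longrightarrow> walk V E (rev xs)"
proof (induction xs rule: induct_list012)
  case (3 x y zs)
  then have "walk V E (rev (y # zs))" and "walk V E [y, x]"
    using adj_sym adj_in_V by auto
  from walk_append[OF this] show ?case by simp
qed simp_all

lemma dist_witness:
  assumes "x \<in> V" "y \<in> V"
  obtains xs where "walk V E xs" "hd xs = x" "last xs = y" "length xs = Suc (dist V E x y)"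
proof -
  obtain xs where xs: "walk V E xs" "hd xs = x" "last xs = y"
    using connected assms unfolding connected_graph_def by blast
  then have "length xs = Suc (length xs - 1)"
    using walk_nonempty by (cases xs) auto
  with xs have "\<exists>n xs. walk V E xs \<and> hd xs = x \<and> last xs = y \<and> length xs = Suc n"
    by blast
  then have "\<exists>xs. walk V E xs \<and> hd xs = x \<and> last xs = y \<and> length xs = Suc (dist V E x y)"
    unfolding dist_def by (rule LeastI_ex)
  then show thesis
    using that by blast
qed

lemma dist_le_walk_length:
  assumes "walk V E xs" "hd xs = x" "last xs = y"
  shows "dist V E x y \<le> length xs - 1"
proof -
  have "length xs = Suc (length xs - 1)"
    using walk_nonempty assms by (cases xs) auto
  then show ?thesis
    unfolding dist_def using assms by (intro Least_le) blast
qed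

lemma dist_sym: "dist V E x y = dist V E y x"
proof -
  have reversed: "\<exists>ys. walk V E ys \<and> hd ys = b \<and> last ys = a \<and> length ys = length xs"
    if "walk V E xs" "hd xs = a" "last xs = b" for xs a b
    using that walk_rev walk_nonempty by (intro exI[of _ "rev xs"]) (auto simp: hd_rev last_rev)
  show ?thesis
    unfolding dist_def by (intro arg_cong[where f = Least] ext) (metis reversed)
qed

lemma dist_triangle:
  assumes "x \<in> V" "y \<in> V" "z \<in> V"
  shows "dist V E x z \<le> dist V E x y + dist V E y z"
proof -
  obtain xs where xs: "walk V E xs" "hd xs = x" "last xs = y" "length xs = Suc (dist V E x y)"
    using dist_witness assms by metis
  obtain ys where ys: "walk V E ys" "hd ys = y" "last ys = z" "length ys = Suc (dist V E y z)"
    using dist_witness assms by metis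
  have "hd (xs @ tl ys) = x" "last (xs @ tl ys) = z"
    using xs ys walk_nonempty by (cases xs; cases ys; auto)+
  with walk_append[OF xs(1) ys(1)] xs ys
  have "dist V E x z \<le> length (xs @ tl ys) - 1" by (intro dist_le_walk_length) auto
  with xs ys show ?thesis by simp
qed

lemma dist_self [simp]: "x \<in> V \<Longrightarrow> dist V E x x = 0"
  using dist_le_walk_length[of "[x]"] by simp

lemma dist_eq_0_iff:
  assumes "x \<in> V" "y \<in> V"
  shows "dist V E x y = 0 \<longleftrightarrow> x = y"
proof
  assume "dist V E x y = 0"
  then obtain xs where "walk V E xs" "hd xs = x" "last xs = y" "length xs = 1"
    using dist_witness assms by (metis One_nat_def)
  then show "x = y" by (cases xs) auto
qed (simp add: assms)

lemma dist_adj: "E x y \<Longrightarrow> dist V E x y = 1"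
  using dist_le_walk_length[of "[x, y]" x y] dist_eq_0_iff adj_in_V by fastforce

lemma dist_le_1_imp_adj:
  assumes "x \<in> V" "y \<in> V" "dist V E x y \<le> 1"
  shows "x = y \<or> E x y"
proof -
  obtain xs where xs: "walk V E xs" "hd xs = x" "last xs = y" "length xs = Suc (dist V E x y)"
    using dist_witness assms by metis
  have "length xs \<le> 2"
    using xs(4) assms(3) by simp
  with xs(1-3) walk_nonempty[OF xs(1)] show ?thesis
    by (cases xs; cases "tl xs") auto
qed

lemma exists_dist_2:
  assumes "x \<in> V" "v \<in> V" "2 \<le> dist V E x v"
  obtains w where "w \<in> V" "dist V E x w = 2"
proof -
  obtain xs where xs: "walk V E xs" "hd xs = x" "last xs = v" "length xs = Suc (dist V E x v)"
    using dist_witness assms by metis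
  with assms(3) obtain a b c rest where xs_eq: "xs = a # b # c # rest"
    by (cases xs; cases "tl xs"; cases "tl (tl xs)") auto
  with xs have "walk V E [a, b, c]" "walk V E (c # rest)" "hd [a, b, c] = x" "last (c # rest) = v"
    by (auto dest: adj_in_V)
  then have c: "c \<in> V" "dist V E x c \<le> 2" "dist V E c v \<le> length rest"
    using dist_le_walk_length by fastforce+
  with dist_triangle[OF assms(1) c(1) assms(2)] xs(4) xs_eq have "dist V E x c = 2" by simp
  with c show thesis using that by blast
qed

lemma dist_leaf:
  assumes "leaf V E l" "E s l" "v \<in> V" "2 \<le> dist V E s v"
  shows "dist V E l v = Suc (dist V E s v)"
proof (rule antisym)
  have "s \<in> V" "l \<in> V" using assms(2) adj_in_V by auto
  then show "dist V E l v \<le> Suc (dist V E s v)"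
    using dist_triangle[of l s v] dist_adj[OF adj_sym[OF assms(2)]] assms(3) by simp
  have "v \<noteq> l" using assms(2,4) dist_adj by auto
  obtain xs where xs: "walk V E xs" "hd xs = l" "last xs = v" "length xs = Suc (dist V E l v)"
    using dist_witness assms \<open>l \<in> V\<close> by metis
  with \<open>v \<noteq> l\<close> obtain b rest where xs_eq: "xs = l # b # rest"
    by (cases xs; cases "tl xs") auto
  have "b \<in> {u \<in> V. E l u}" "s \<in> {u \<in> V. E l u}" "card {u \<in> V. E l u} = 1"
    using xs xs_eq assms(1,2) adj_sym adj_in_V by (auto simp: leaf_def)
  then have "b = s" by (metis card_1_singletonE singletonD)
  with xs xs_eq show "Suc (dist V E s v) \<le> dist V E l v"
    using dist_le_walk_length[of "b # rest" b v] by simp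
qed

lemma finite_edges: "finite (edges V E)"
proof -
  have "edges V E \<subseteq> Pow V" by (auto simp: edges_def)
  then show ?thesis using finite_V by (simp add: finite_subset)
qed

lemma neighbour_of_dominating_vertex_is_leaf:
  assumes edges: "card (edges V E) = card V - 1"
    and dominating: "\<forall>v\<in>V. v = x \<or> E x v" and "x \<in> V" "E x u"
  shows "leaf V E u"
proof (rule ccontr)
  assume "\<not> leaf V E u"
  moreover have "u \<in> V" "x \<noteq> u" "x \<in> {v \<in> V. E u v}"
    using \<open>E x u\<close> adj_in_V adj_sym by auto
  ultimately have "{v \<in> V. E u v} \<noteq> {x}"
    by (auto simp: leaf_def)
  with \<open>x \<in> {v \<in> V. E u v}\<close> have "\<not> {v \<in> V. E u v} \<subseteq> {x}"
    by blast
  then obtain w where w: "w \<in> V" "E u w" "w \<noteq> x" by blast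
  define N where "N = {v \<in> V. E x v}"
  have V_eq: "V = insert x N" and "x \<notin> N" and "finite N"
    using dominating \<open>x \<in> V\<close> adj_in_V finite_V by (auto simp: N_def)
  have "inj_on (\<lambda>v. {x, v}) N"
    using \<open>x \<notin> N\<close> by (auto intro!: inj_onI simp: doubleton_eq_iff)
  moreover have "{u, w} \<notin> (\<lambda>v. {x, v}) ` N"
    using \<open>x \<noteq> u\<close> w(3) by auto
  ultimately have card_eq: "card (insert {u, w} ((\<lambda>v. {x, v}) ` N)) = card V"
    using V_eq \<open>x \<notin> N\<close> \<open>finite N\<close> by (simp add: card_image)
  have "insert {u, w} ((\<lambda>v. {x, v}) ` N) \<subseteq> edges V E"
    using \<open>u \<in> V\<close> \<open>x \<in> V\<close> w by (auto simp: edges_def N_def)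
  from card_mono[OF finite_edges this] card_eq have "card V \<le> card (edges V E)"
    by simp
  with edges have "card V = 0" by simp
  with \<open>x \<in> V\<close> finite_V show False by simp
qed

lemma weak_support_exists_dist_2:
  assumes edges: "card (edges V E) = card V - 1" and "3 \<le> card V"
    and "weak_support V E x"
  obtains w where "w \<in> V" "dist V E x w = 2"
proof -
  have "x \<in> V" and leaves: "card {u \<in> V. E x u \<and> leaf V E u} = 1"
    using \<open>weak_support V E x\<close> by (simp_all add: weak_support_def)
  have "\<exists>w\<in>V. dist V E x w = 2"
  proof (rule ccontr)
    assume no_dist_2: "\<not> (\<exists>w\<in>V. dist V E x w = 2)"
    have dominating: "\<forall>v\<in>V. v = x \<or> E x v"
    proof
      fix v assume "v \<in> V"
      with no_dist_2 exists_dist_2[OF \<open>x \<in> V\<close> \<open>v \<in> V\<close>] have "\<not> 2 \<le> dist V E x v"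
        by blast
      then have "dist V E x v \<le> 1" by simp
      with dist_le_1_imp_adj \<open>x \<in> V\<close> \<open>v \<in> V\<close> show "v = x \<or> E x v" by blast
    qed
    then have "{u \<in> V. E x u \<and> leaf V E u} = {u \<in> V. E x u}"
      using neighbour_of_dominating_vertex_is_leaf[OF edges _ \<open>x \<in> V\<close>] by blast
    with leaves obtain l where "{u \<in> V. E x u} = {l}"
      by (metis card_1_singletonE)
    with dominating have "V \<subseteq> {x, l}" by blast
    moreover have "card {x, l} \<le> 2"
      by (cases "x = l") simp_all
    ultimately have "card V \<le> 2"
      using card_mono[of "{x, l}" V] by simp
    with \<open>3 \<le> card V\<close> show False by simp
  qed
  with that show thesis by blast
qed

lemma two_packing_extend_by_leaves:
  assumes packing: "two_packing V E P"
    and has_leaf: "\<forall>a\<in>P. \<exists>u. E a u \<and> leaf V E u"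
    and "w \<in> V" and far: "\<forall>a\<in>P. 2 \<le> dist V E w a"
  shows "\<exists>Q. two_packing V E Q \<and> card Q = Suc (card P)"
proof -
  obtain lf where lf: "\<forall>a\<in>P. E a (lf a) \<and> leaf V E (lf a)"
    using has_leaf by metis
  define f where "f a = (if dist V E w a \<le> 2 then lf a else a)" for a
  have PV: "P \<subseteq> V" and sep: "\<And>a b. a \<in> P \<Longrightarrow> b \<in> P \<Longrightarrow> a \<noteq> b \<Longrightarrow> 3 \<le> dist V E a b"
    using packing by (auto simp: two_packing_def)
  have f_V: "f a \<in> V" if "a \<in> P" for a
    using that PV lf adj_in_V by (auto simp: f_def)
  have f_moves_away: "dist V E a v \<le> dist V E (f a) v"
    if "a \<in> P" "v \<in> V" "2 \<le> dist V E a v" for a v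
    using dist_leaf[of "lf a" a v] lf that by (auto simp: f_def)
  have f_far_from_w: "3 \<le> dist V E (f a) w" if "a \<in> P" for a
  proof (cases "dist V E w a \<le> 2")
    case True
    with far that have "dist V E a w = 2" by (auto simp: dist_sym intro: antisym)
    with dist_leaf[of "lf a" a w] lf that \<open>w \<in> V\<close> True show ?thesis by (simp add: f_def)
  next
    case False
    then show ?thesis by (simp add: f_def dist_sym)
  qed
  have f_sep: "3 \<le> dist V E (f a) (f b)" if "a \<in> P" "b \<in> P" "a \<noteq> b" for a b
  proof -
    have "3 \<le> dist V E a (f b)"
      using f_moves_away[of b a] sep[of b a] that PV by (auto simp: dist_sym)
    with f_moves_away[of a "f b"] f_V that show ?thesis by simp
  qed
  have "inj_on f P"
    using f_sep f_V by (fastforce intro: inj_onI)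
  moreover have "w \<notin> f ` P"
    using f_far_from_w \<open>w \<in> V\<close> by fastforce
  moreover have "two_packing V E (insert w (f ` P))"
    unfolding two_packing_def using \<open>w \<in> V\<close> f_V f_far_from_w f_sep
    by (auto simp: dist_sym)
  ultimately show ?thesis
    using finite_subset[OF PV finite_V] by (intro exI[of _ "insert w (f ` P)"]) (simp add: card_image)
qed

lemma exists_two_packing_larger_than_weak_supports:
  assumes edges: "card (edges V E) = card V - 1" and "3 \<le> card V"
    and packing: "two_packing V E (weak_supports V E)"
    and x: "x \<in> weak_supports V E"
    and far: "\<forall>y \<in> weak_supports V E - {x}. 4 \<le> dist V E x y"
  shows "\<exists>Q. two_packing V E Q \<and> card Q = Suc (card (weak_supports V E))"
proof -
  have "x \<in> V" using x by (simp add: weak_supports_def)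
  obtain w where "w \<in> V" "dist V E x w = 2"
    using weak_support_exists_dist_2[OF edges \<open>3 \<le> card V\<close>] x
    by (auto simp: weak_supports_def)
  have "2 \<le> dist V E w a" if "a \<in> weak_supports V E" for a
  proof (cases "a = x")
    case False
    with far that have "4 \<le> dist V E x a" by blast
    also have "\<dots> \<le> dist V E x w + dist V E w a"
      using dist_triangle \<open>x \<in> V\<close> \<open>w \<in> V\<close> that by (simp add: weak_supports_def)
    finally show ?thesis using \<open>dist V E x w = 2\<close> by simp
  qed (use \<open>dist V E x w = 2\<close> in \<open>simp add: dist_sym\<close>)
  moreover have "\<forall>a \<in> weak_supports V E. \<exists>u. E a u \<and> leaf V E u"
    by (auto simp: weak_supports_def weak_support_def card_1_singleton_iff)
  ultimately show ?thesis
    using two_packing_extend_by_leaves[OF packing _ \<open>w \<in> V\<close>] by blast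
qed

end

theorem claim2:
  fixes V :: "'a set" and E :: "'a \<Rightarrow> 'a \<Rightarrow> bool"
  assumes "tree V E"
    and "card V \<ge> 6"
    and "max_two_packing V E (weak_supports V E)"
  shows "\<forall>x \<in> weak_supports V E. dist_set V E x (weak_supports V E - {x}) = 3"
proof
  fix x assume x: "x \<in> weak_supports V E"
  interpret connected_simple_graph V E
    using assms(1) by unfold_locales (simp_all add: tree_def)
  let ?S = "weak_supports V E"
  have packing: "two_packing V E ?S" and maximal: "\<And>Q. two_packing V E Q \<Longrightarrow> card Q \<le> card ?S"
    using assms(3) by (simp_all add: max_two_packing_def)
  have sep: "\<forall>y \<in> ?S - {x}. 3 \<le> dist V E x y"
    using packing x by (auto simp: two_packing_def)
  have "finite ?S"
    using finite_V by (simp add: weak_supports_def)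
  show "dist_set V E x (?S - {x}) = 3"
  proof (rule ccontr)
    assume not_3: "dist_set V E x (?S - {x}) \<noteq> 3"
    have "\<forall>y \<in> ?S - {x}. 4 \<le> dist V E x y"
    proof
      fix y assume y: "y \<in> ?S - {x}"
      have "3 \<le> dist V E x y" using sep y by blast
      moreover from dist_set_eqI[OF _ y] sep \<open>finite ?S\<close> not_3 have "dist V E x y \<noteq> 3"
        by auto
      ultimately show "4 \<le> dist V E x y" by simp
    qed
    with exists_two_packing_larger_than_weak_supports assms(1,2) packing x maximal
    show False by (fastforce simp: tree_def)
  qed
qed

end
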